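(* There exist infinitely many positive integers $n$ such that for each such $n$ there is a graph $G$ with exactly $\binom{2n}{2}$ edges with the property that for every bipartition $V_1,V_2$ of $V(G)$, $\max\{e(V_1),e(V_2)\}\ge \binom{n}{2}+\frac{5n}{48}$.
   Context: For a bipartition $V_1,V_2$ of $V(G)$, $e(V_i)$ denotes the number of edges of $G$ with both ends in $V_i$. *)

theory Defs
  imports Complex_Main
begin

definition simple_graph :: "'a set \<Rightarrow> 'a set set \<Rightarrow> bool" where
  "simple_graph V E \<longleftrightarrow> finite V \<and> (\<forall>e\<in>E. e \<subseteq> V \<and> card e = 2)"

definition e_in :: "'a set set \<Rightarrow> 'a set \<Rightarrow> nat" where
  "e_in E S = card {e \<in> E. e \<subseteq> S}"

end

theory Submission
  imports Defs
begin

text \<open>Take the disjoint union of cliques on \<open>2n - 1\<close> and on \<open>4k + 3\<close> vertices, where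
  \<open>n = 4k\<^sup>2 + 5k + 2\<close>; since \<open>C(4k+3, 2) = 2n - 1\<close> it has \<open>C(2n, 2)\<close> edges.
  In any bipartition one side contains at least \<open>n\<close> vertices of the large clique.
  If it contains more, it spans at least \<open>C(n+1, 2) = C(n, 2) + n\<close> edges. Otherwise
  the large clique splits as \<open>n, n - 1\<close>, and whichever side receives a large enough
  share of the small clique (at least \<open>k + 1\<close> resp. \<open>3k + 3\<close> of its vertices)
  spans at least \<open>C(n, 2) + 5n/48\<close> edges.\<close>

lemma real_choose_two: "real (x choose 2) = real x * (real x - 1) / 2"
proof -
  have "even (x * (x - 1))"
    by auto
  then have "2 * (x choose 2) = x * (x - 1)"
    by (simp add: choose_two)
  then have "2 * real (x choose 2) = real x * real (x - 1)"
    by (metis of_nat_mult of_nat_numeral)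
  then show ?thesis
    by (cases x) auto
qed

lemma Suc_choose_two: "Suc m choose 2 = (m choose 2) + m"
  by (simp add: numeral_2_eq_2)

definition complete_edges :: "'a set \<Rightarrow> 'a set set" where
  "complete_edges X = {e. e \<subseteq> X \<and> card e = 2}"

lemma finite_complete_edges: "finite X \<Longrightarrow> finite (complete_edges X)"
  unfolding complete_edges_def by (rule finite_subset[of _ "Pow X"]) auto

lemma card_complete_edges: "finite X \<Longrightarrow> card (complete_edges X) = card X choose 2"
  unfolding complete_edges_def by (rule n_subsets)

lemma complete_edges_disjoint:
  assumes "A \<inter> B = {}"
  shows "complete_edges A \<inter> complete_edges B = {}"
  using assms unfolding complete_edges_def by (fastforce simp: card_2_iff)

lemma simple_graph_complete_edges_Un:
  "finite A \<Longrightarrow> finite B \<Longrightarrow> simple_graph (A \<union> B) (complete_edges A \<union> complete_edges B)"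
  unfolding simple_graph_def complete_edges_def by auto

lemma card_complete_edges_Un:
  assumes "finite A" "finite B" "A \<inter> B = {}"
  shows "card (complete_edges A \<union> complete_edges B) = (card A choose 2) + (card B choose 2)"
  using assms
  by (simp add: card_Un_disjoint finite_complete_edges complete_edges_disjoint card_complete_edges)

lemma e_in_complete_edges_Un:
  assumes "finite A" "finite B" "A \<inter> B = {}"
  shows "e_in (complete_edges A \<union> complete_edges B) S
           = (card (A \<inter> S) choose 2) + (card (B \<inter> S) choose 2)"
proof -
  have "{e \<in> complete_edges A \<union> complete_edges B. e \<subseteq> S}
          = complete_edges (A \<inter> S) \<union> complete_edges (B \<inter> S)"
    unfolding complete_edges_def by auto
  then show ?thesis
    unfolding e_in_def using assms by (auto intro: card_complete_edges_Un)
qed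

lemma card_split_by_bipartition:
  assumes "finite A" "A \<subseteq> V1 \<union> V2" "V1 \<inter> V2 = {}"
  shows "card (A \<inter> V1) + card (A \<inter> V2) = card A"
proof -
  have "A = (A \<inter> V1) \<union> (A \<inter> V2)" "(A \<inter> V1) \<inter> (A \<inter> V2) = {}"
    using assms(2,3) by auto
  then show ?thesis
    using assms(1) by (metis card_Un_disjoint finite_Int)
qed

lemma unbalanced_split_bound:
  fixes k n a1 a2 b1 b2 :: nat
  assumes k: "k \<ge> 2" and n: "n = 4 * k\<^sup>2 + 5 * k + 2"
    and a: "a1 + a2 = 2 * n - 1" and b: "b1 + b2 = 4 * k + 3" and a1: "n \<le> a1"
  shows "real (n choose 2) + 5 * real n / 48 \<le> real ((a1 choose 2) + (b1 choose 2)) \<or>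
         real (n choose 2) + 5 * real n / 48 \<le> real ((a2 choose 2) + (b2 choose 2))"
proof -
  have rn: "real n = 4 * real k ^ 2 + 5 * real k + 2"
    using n by simp
  have k2: "2 \<le> real k"
    using k by simp
  have kk: "2 * real k \<le> real k * real k"
    using k2 by (intro mult_right_mono) auto
  consider "Suc n \<le> a1" | "a1 = n" "k + 1 \<le> b1" | "a1 = n" "3 * k + 3 \<le> b2"
    using a1 b by linarith
  then show ?thesis
  proof cases
    case 1
    have "(n choose 2) + n \<le> a1 choose 2"
      using binomial_right_mono[OF 1, of 2] Suc_choose_two[of n] by linarith
    then have "real (n choose 2) + real n \<le> real ((a1 choose 2) + (b1 choose 2))"
      by linarith
    then show ?thesis
      by auto
  next
    case 2
    have "5 * real n / 48 \<le> (real k * real k + real k) / 2"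
      unfolding rn power2_eq_square by (simp add: field_simps) (use kk k2 in linarith)
    also have "\<dots> = real ((k + 1) choose 2)"
      by (simp add: real_choose_two algebra_simps)
    also have "\<dots> \<le> real (b1 choose 2)"
      using binomial_right_mono[OF 2(2), of 2] by simp
    finally show ?thesis
      using 2(1) by auto
  next
    case 3
    have a2: "Suc a2 = n"
      using a 3(1) n by simp
    have "5 * real n / 48 + (real n - 1) \<le> (9 * (real k * real k) + 15 * real k + 6) / 2"
      unfolding rn power2_eq_square by (simp add: field_simps)
    also have "\<dots> = real ((3 * k + 3) choose 2)"
      by (simp add: real_choose_two algebra_simps)
    also have "\<dots> \<le> real (b2 choose 2)"
      using binomial_right_mono[OF 3(2), of 2] by simp
    finally have "real (n choose 2) + 5 * real n / 48 \<le> real (a2 choose 2) + real (b2 choose 2)"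
      using a2 Suc_choose_two[of a2] by auto
    then show ?thesis
      by simp
  qed
qed

lemma two_cliques_bipartition_bound:
  fixes k n :: nat
  assumes k: "k \<ge> 2" and n: "n = 4 * k\<^sup>2 + 5 * k + 2"
    and fin: "finite A" "finite B" and AB: "A \<inter> B = {}"
    and cA: "card A = 2 * n - 1" and cB: "card B = 4 * k + 3"
    and V: "V1 \<union> V2 = A \<union> B" "V1 \<inter> V2 = {}"
  shows "real (max (e_in (complete_edges A \<union> complete_edges B) V1)
                   (e_in (complete_edges A \<union> complete_edges B) V2))
           \<ge> real (n choose 2) + 5 * real n / 48"
proof -
  define a1 where "a1 = card (A \<inter> V1)"
  define a2 where "a2 = card (A \<inter> V2)"
  define b1 where "b1 = card (B \<inter> V1)"
  define b2 where "b2 = card (B \<inter> V2)"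
  have a: "a1 + a2 = 2 * n - 1" and b: "b1 + b2 = 4 * k + 3"
    using card_split_by_bipartition[of A V1 V2] card_split_by_bipartition[of B V1 V2]
      fin V cA cB unfolding a1_def a2_def b1_def b2_def by auto
  have "real (n choose 2) + 5 * real n / 48 \<le> real ((a1 choose 2) + (b1 choose 2)) \<or>
        real (n choose 2) + 5 * real n / 48 \<le> real ((a2 choose 2) + (b2 choose 2))"
  proof (cases "n \<le> a1")
    case True
    show ?thesis
      using unbalanced_split_bound[OF k n a b True] .
  next
    case False
    then have "n \<le> a2"
      using a by simp
    from unbalanced_split_bound[OF k n _ _ this, of a1 b2 b1] a b show ?thesis
      by (simp add: add.commute disj_commute)
  qed
  then show ?thesis
    using e_in_complete_edges_Un[OF fin AB] unfolding a1_def a2_def b1_def b2_def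
    by (auto simp: max_def)
qed

lemma card_two_cliques_edges:
  fixes k n :: nat
  assumes n: "n = 4 * k\<^sup>2 + 5 * k + 2"
    and fin: "finite A" "finite B" and AB: "A \<inter> B = {}"
    and cA: "card A = 2 * n - 1" and cB: "card B = 4 * k + 3"
  shows "card (complete_edges A \<union> complete_edges B) = 2 * n choose 2"
proof -
  have "real ((4 * k + 3) choose 2) = real (2 * n - 1)"
    using n by (simp add: real_choose_two power2_eq_square algebra_simps)
  then have "(4 * k + 3) choose 2 = 2 * n - 1"
    by (simp only: of_nat_eq_iff)
  moreover have "2 * n = Suc (2 * n - 1)"
    using n by simp
  ultimately show ?thesis
    using card_complete_edges_Un[OF fin AB] cA cB Suc_choose_two[of "2 * n - 1"] by simp
qed

lemma exists_graph_large_bipartition_sides: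
  fixes k n :: nat
  assumes k: "k \<ge> 2" and n: "n = 4 * k\<^sup>2 + 5 * k + 2"
  shows "\<exists>(V::nat set) E. simple_graph V E \<and> card E = (2 * n) choose 2 \<and>
           (\<forall>V1 V2. V1 \<union> V2 = V \<and> V1 \<inter> V2 = {} \<longrightarrow>
              real (max (e_in E V1) (e_in E V2)) \<ge> real (n choose 2) + 5 * real n / 48)"
proof -
  define A B where "A = {0..<2 * n - 1}" and "B = {2 * n - 1..<2 * n - 1 + (4 * k + 3)}"
  have fin: "finite A" "finite B" and AB: "A \<inter> B = {}"
    and cA: "card A = 2 * n - 1" and cB: "card B = 4 * k + 3"
    unfolding A_def B_def by auto
  show ?thesis
    using simple_graph_complete_edges_Un[OF fin] card_two_cliques_edges[OF n fin AB cA cB]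
      two_cliques_bipartition_bound[OF k n fin AB cA cB] by blast
qed

theorem theorem1p4:
  shows "infinite {n::nat. n > 0 \<and>
     (\<exists>(V::nat set) E. simple_graph V E \<and> card E = (2 * n) choose 2 \<and>
        (\<forall>V1 V2. V1 \<union> V2 = V \<and> V1 \<inter> V2 = {} \<longrightarrow>
           real (max (e_in E V1) (e_in E V2)) \<ge> real (n choose 2) + 5 * real n / 48))}"
    (is "infinite ?S")
proof -
  let ?f = "\<lambda>k::nat. 4 * k\<^sup>2 + 5 * k + 2"
  have "strict_mono ?f"
    by (rule strict_monoI) (simp add: add_less_mono power_strict_mono)
  then have "infinite (?f ` {2..})"
    by (simp add: finite_image_iff strict_mono_imp_inj_on infinite_Ici)
  moreover have "?f ` {2..} \<subseteq> ?S"
    using exists_graph_large_bipartition_sides by auto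
  ultimately show ?thesis
    using infinite_super by blast
qed

end
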